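(* Let $R>0$ and let $\mathbf L\colon\mathbb R^n\times\mathbb R^m\to\mathbb R$ be an $R$-smooth convex-concave function with a saddle point $\mathbf z^\star$. Let $\alpha_0\in(0,\frac{3}{4R})$ and define $$\alpha_{k+1}=\alpha_k\left(1-\frac{1}{(k+1)(k+3)}\,\frac{\alpha_k^2R^2}{1-\alpha_k^2R^2}\right),\qquad k\ge0,$$ and $\alpha_\infty=\lim_{k\to\infty}\alpha_k$. Let $\mathbf z^0\in\mathbb R^n\times\mathbb R^m$ and define the EAG-V iterates $$\mathbf z^{k+1/2}=\mathbf z^k+\tfrac{1}{k+2}(\mathbf z^0-\mathbf z^k)-\alpha_k\mathbf G(\mathbf z^k),\qquad \mathbf z^{k+1}=\mathbf z^k+\tfrac{1}{k+2}(\mathbf z^0-\mathbf z^k)-\alpha_k\mathbf G(\mathbf z^{k+1/2}),\quad k\ge0.$$ Then for all $k\ge0$, $$\|\nabla\mathbf L(\mathbf z^k)\|^2\le\frac{4(1+\alpha_0\alpha_\infty R^2)}{\alpha_\infty^2}\,\frac{\|\mathbf z^0-\mathbf z^\star\|^2}{(k+1)(k+2)}.$$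
   Context: Write $\mathbf z=(\mathbf x,\mathbf y)$. $\mathbf L$ convex-concave: convex in $\mathbf x$ for fixed $\mathbf y$, concave in $\mathbf y$ for fixed $\mathbf x$. A saddle point $(\mathbf x^\star,\mathbf y^\star)$ satisfies $\mathbf L(\mathbf x^\star,\mathbf y)\le\mathbf L(\mathbf x^\star,\mathbf y^\star)\le\mathbf L(\mathbf x,\mathbf y^\star)$ for all $\mathbf x,\mathbf y$. $\mathbf G(\mathbf z)=(\nabla_{\mathbf x}\mathbf L(\mathbf x,\mathbf y),-\nabla_{\mathbf y}\mathbf L(\mathbf x,\mathbf y))$; $\mathbf L$ is $R$-smooth if it is differentiable and $\mathbf G$ is $R$-Lipschitz. $\|\nabla\mathbf L\|=\|\mathbf G\|$. *)

theory Defs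
  imports "HOL-Analysis.Analysis"
begin

type_synonym ('n,'m) pt = "(real^'n) \<times> (real^'m)"

definition grad :: "(('n::finite,'m::finite) pt \<Rightarrow> real) \<Rightarrow> ('n,'m) pt \<Rightarrow> ('n,'m) pt" where
  "grad L z = (SOME g. (L has_derivative (\<lambda>h. g \<bullet> h)) (at z))"

definition saddle_op :: "(('n::finite,'m::finite) pt \<Rightarrow> real) \<Rightarrow> ('n,'m) pt \<Rightarrow> ('n,'m) pt" where
  "saddle_op L z = (fst (grad L z), - snd (grad L z))"

definition convex_concave :: "(('n::finite,'m::finite) pt \<Rightarrow> real) \<Rightarrow> bool" where
  "convex_concave L \<longleftrightarrow>
     (\<forall>y. convex_on UNIV (\<lambda>x. L (x, y))) \<and> (\<forall>x. concave_on UNIV (\<lambda>y. L (x, y)))"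

definition saddle_point :: "(('n::finite,'m::finite) pt \<Rightarrow> real) \<Rightarrow> ('n,'m) pt \<Rightarrow> bool" where
  "saddle_point L zs \<longleftrightarrow>
     (\<forall>x y. L (fst zs, y) \<le> L zs \<and> L zs \<le> L (x, snd zs))"

definition R_smooth :: "real \<Rightarrow> (('n::finite,'m::finite) pt \<Rightarrow> real) \<Rightarrow> bool" where
  "R_smooth R L \<longleftrightarrow> (\<forall>z. L differentiable (at z)) \<and> R-lipschitz_on UNIV (saddle_op L)"

fun eag_alpha :: "real \<Rightarrow> real \<Rightarrow> nat \<Rightarrow> real" where
  "eag_alpha R a0 0 = a0"
| "eag_alpha R a0 (Suc k) =
     (let a = eag_alpha R a0 k in
      a * (1 - 1 / ((real k + 1) * (real k + 3)) * (a^2 * R^2 / (1 - a^2 * R^2))))"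

fun eag_z :: "(('n::finite,'m::finite) pt \<Rightarrow> real) \<Rightarrow> real \<Rightarrow> real \<Rightarrow> ('n,'m) pt \<Rightarrow> nat \<Rightarrow> ('n,'m) pt" where
  "eag_z L R a0 z0 0 = z0"
| "eag_z L R a0 z0 (Suc k) =
     (let zk = eag_z L R a0 z0 k;
          a = eag_alpha R a0 k;
          zh = zk + (1 / (real k + 2)) *\<^sub>R (z0 - zk) - a *\<^sub>R saddle_op L zk
      in zk + (1 / (real k + 2)) *\<^sub>R (z0 - zk) - a *\<^sub>R saddle_op L zh)"

end

theory Submission
  imports Defs
begin

text \<open>
  A Lyapunov argument. Put
  V k = alpha_k (k+1)(k+2)/2 |G z_k|^2 + (k+1) <G z_k, z_k - z_0>.
  For one step, V k - V (k+1) is the sum of a positive multiple of the monotonicity term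
  <G z_(k+1) - G z_k, z_(k+1) - z_k>, a positive multiple of the Lipschitz slack
  alpha_k^2 R^2 |G z_(k+1/2) - G z_k|^2 - |G z_(k+1/2) - G z_(k+1)|^2, and a quadratic form in
  G z_(k+1/2), G z_(k+1) whose discriminant vanishes precisely because of the recursion for alpha_k.
  Hence V k \<le> V 0 \<le> alpha_0 R^2 |z_0 - z*|^2. Monotonicity at the saddle point gives
  <G z_k, z_k - z_0> \<ge> - |G z_k| |z_0 - z*|, and the resulting quadratic inequality in |G z_k|
  gives the rate, since alpha_k decreases to a positive limit.
\<close>

section \<open>Convex-concave functions and the saddle operator\<close>

lemma convex_on_UNIV_imp_above_tangent:
  fixes f :: "'a::real_normed_vector \<Rightarrow> real"
  assumes cvx: "convex_on UNIV f" and deriv: "(f has_derivative f') (at x)"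
  shows "f x + f' (y - x) \<le> f y"
proof -
  define \<phi> where "\<phi> = (\<lambda>t::real. f (x + t *\<^sub>R (y - x)))"
  have "convex_on UNIV \<phi>"
  proof (rule convex_onI)
    fix u s t :: real
    assume "0 < u" "u < 1"
    have "x + ((1 - u) *\<^sub>R s + u *\<^sub>R t) *\<^sub>R (y - x)
          = (1 - u) *\<^sub>R (x + s *\<^sub>R (y - x)) + u *\<^sub>R (x + t *\<^sub>R (y - x))"
      by (simp add: algebra_simps)
    then show "\<phi> ((1 - u) *\<^sub>R s + u *\<^sub>R t) \<le> (1 - u) * \<phi> s + u * \<phi> t"
      unfolding \<phi>_def using convex_onD[OF cvx, of u] \<open>0 < u\<close> \<open>u < 1\<close> by simp
  qed auto
  moreover have "(\<phi> has_field_derivative f' (y - x)) (at 0)"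
  proof -
    interpret f': bounded_linear f' using deriv by (rule has_derivative_bounded_linear)
    have "((\<lambda>t::real. x + t *\<^sub>R (y - x)) has_derivative (\<lambda>t. t *\<^sub>R (y - x))) (at 0)"
      by (auto intro!: derivative_eq_intros)
    from has_derivative_compose[OF this] deriv
    have "(\<phi> has_derivative (\<lambda>t. f' (t *\<^sub>R (y - x)))) (at 0)"
      unfolding \<phi>_def by simp
    then show ?thesis
      by (simp add: has_field_derivative_def f'.scaleR mult_commute_abs)
  qed
  ultimately have "f' (y - x) * (1 - 0) \<le> \<phi> 1 - \<phi> 0"
    by (intro convex_on_imp_above_tangent) auto
  then show ?thesis by (simp add: \<phi>_def)
qed

lemma concave_on_UNIV_imp_below_tangent:
  fixes f :: "'a::real_normed_vector \<Rightarrow> real"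
  assumes "concave_on UNIV f" and "(f has_derivative f') (at x)"
  shows "f y \<le> f x + f' (y - x)"
proof -
  have "convex_on UNIV (\<lambda>x. - f x)" using assms(1) by (simp add: concave_on_def)
  moreover have "((\<lambda>x. - f x) has_derivative (\<lambda>h. - f' h)) (at x)"
    using assms(2) by (auto intro!: derivative_eq_intros)
  ultimately have "- f x + - f' (y - x) \<le> - f y" by (rule convex_on_UNIV_imp_above_tangent)
  then show ?thesis by simp
qed

lemma has_derivative_grad:
  fixes L :: "('n::finite,'m::finite) pt \<Rightarrow> real"
  assumes "L differentiable (at z)"
  shows "(L has_derivative (\<lambda>h. grad L z \<bullet> h)) (at z)"
proof -
  obtain f' where deriv: "(L has_derivative f') (at z)"
    using assms by (auto simp: differentiable_def)
  have "f' = (\<lambda>h. adjoint f' 1 \<bullet> h)"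
    using adjoint_clauses(2)[OF has_derivative_linear[OF deriv], of 1] by (auto simp: fun_eq_iff)
  with deriv have "\<exists>g. (L has_derivative (\<lambda>h. g \<bullet> h)) (at z)" by metis
  then show ?thesis unfolding grad_def by (rule someI_ex)
qed

lemma has_derivative_grad_fst:
  fixes L :: "('n::finite,'m::finite) pt \<Rightarrow> real"
  assumes "L differentiable (at (x, y))"
  shows "((\<lambda>x. L (x, y)) has_derivative (\<lambda>h. fst (grad L (x, y)) \<bullet> h)) (at x)"
proof -
  have "((\<lambda>x. (x, y)) has_derivative (\<lambda>h. (h, 0))) (at x)"
    by (auto intro!: derivative_eq_intros)
  from has_derivative_compose[OF this has_derivative_grad[OF assms]] show ?thesis
    by (simp add: inner_Pair_0)
qed

lemma has_derivative_grad_snd: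
  fixes L :: "('n::finite,'m::finite) pt \<Rightarrow> real"
  assumes "L differentiable (at (x, y))"
  shows "((\<lambda>y. L (x, y)) has_derivative (\<lambda>h. snd (grad L (x, y)) \<bullet> h)) (at y)"
proof -
  have "((\<lambda>y. (x, y)) has_derivative (\<lambda>h. (0, h))) (at y)"
    by (auto intro!: derivative_eq_intros)
  from has_derivative_compose[OF this has_derivative_grad[OF assms]] show ?thesis
    by (simp add: inner_Pair_0)
qed

lemma convex_concave_fst_above_tangent:
  fixes L :: "('n::finite,'m::finite) pt \<Rightarrow> real"
  assumes "R_smooth R L" "convex_concave L"
  shows "L (x, y) + fst (grad L (x, y)) \<bullet> (x' - x) \<le> L (x', y)"
proof -
  have "L differentiable (at (x, y))" using assms(1) by (simp add: R_smooth_def)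
  from convex_on_UNIV_imp_above_tangent[OF _ has_derivative_grad_fst[OF this]] assms(2)
  show ?thesis by (simp add: convex_concave_def)
qed

lemma convex_concave_snd_below_tangent:
  fixes L :: "('n::finite,'m::finite) pt \<Rightarrow> real"
  assumes "R_smooth R L" "convex_concave L"
  shows "L (x, y') \<le> L (x, y) + snd (grad L (x, y)) \<bullet> (y' - y)"
proof -
  have "L differentiable (at (x, y))" using assms(1) by (simp add: R_smooth_def)
  from concave_on_UNIV_imp_below_tangent[OF _ has_derivative_grad_snd[OF this]] assms(2)
  show ?thesis by (simp add: convex_concave_def)
qed

lemma saddle_op_monotone:
  fixes L :: "('n::finite,'m::finite) pt \<Rightarrow> real"
  assumes "R_smooth R L" "convex_concave L"
  shows "0 \<le> (saddle_op L z - saddle_op L w) \<bullet> (z - w)"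
proof -
  obtain x y x' y' where zw: "z = (x, y)" "w = (x', y')" by force
  have "L (x, y) + fst (grad L (x, y)) \<bullet> (x' - x) \<le> L (x', y)"
    "L (x', y') + fst (grad L (x', y')) \<bullet> (x - x') \<le> L (x, y')"
    by (rule convex_concave_fst_above_tangent[OF assms])+
  moreover have "L (x, y') \<le> L (x, y) + snd (grad L (x, y)) \<bullet> (y' - y)"
    "L (x', y) \<le> L (x', y') + snd (grad L (x', y')) \<bullet> (y - y')"
    by (rule convex_concave_snd_below_tangent[OF assms])+
  ultimately show ?thesis
    unfolding zw by (simp add: saddle_op_def inner_diff_left inner_diff_right)
qed

lemma saddle_op_inner_nonneg_saddle_point:
  fixes L :: "('n::finite,'m::finite) pt \<Rightarrow> real"
  assumes "R_smooth R L" "convex_concave L" "saddle_point L zs"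
  shows "0 \<le> saddle_op L z \<bullet> (z - zs)"
proof -
  obtain x y xs ys where zs: "z = (x, y)" "zs = (xs, ys)" by force
  have "L (xs, y) \<le> L (xs, ys)" "L (xs, ys) \<le> L (x, ys)"
    using assms(3) unfolding saddle_point_def zs by auto
  moreover have "L (x, y) + fst (grad L (x, y)) \<bullet> (xs - x) \<le> L (xs, y)"
    by (rule convex_concave_fst_above_tangent[OF assms(1,2)])
  moreover have "L (x, ys) \<le> L (x, y) + snd (grad L (x, y)) \<bullet> (ys - y)"
    by (rule convex_concave_snd_below_tangent[OF assms(1,2)])
  ultimately show ?thesis
    unfolding zs by (simp add: saddle_op_def inner_diff_left inner_diff_right)
qed

lemma saddle_op_lipschitz:
  fixes L :: "('n::finite,'m::finite) pt \<Rightarrow> real"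
  assumes "R_smooth R L"
  shows "norm (saddle_op L z - saddle_op L w) \<le> R * norm (z - w)"
  using assms lipschitz_onD[of R UNIV "saddle_op L" z w]
  by (simp add: R_smooth_def dist_norm)

lemma grad_saddle_point_eq_0:
  fixes L :: "('n::finite,'m::finite) pt \<Rightarrow> real"
  assumes "R_smooth R L" "saddle_point L zs"
  shows "grad L zs = 0"
proof -
  obtain xs ys where zs: "zs = (xs, ys)" by force
  have diff: "L differentiable (at (xs, ys))" using assms(1) by (simp add: R_smooth_def)
  have "(\<lambda>h. fst (grad L zs) \<bullet> h) = (\<lambda>h. 0)"
    using differential_zero_maxmin[OF _ _ has_derivative_grad_fst[OF diff], where S = UNIV] assms(2)
    unfolding saddle_point_def zs by auto
  moreover have "(\<lambda>h. snd (grad L zs) \<bullet> h) = (\<lambda>h. 0)"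
    using differential_zero_maxmin[OF _ _ has_derivative_grad_snd[OF diff], where S = UNIV] assms(2)
    unfolding saddle_point_def zs by auto
  ultimately have "fst (grad L zs) = 0" "snd (grad L zs) = 0"
    by (metis inner_eq_zero_iff)+
  then show ?thesis by (simp add: prod_eq_iff)
qed

lemma saddle_op_saddle_point_eq_0:
  fixes L :: "('n::finite,'m::finite) pt \<Rightarrow> real"
  assumes "R_smooth R L" "saddle_point L zs"
  shows "saddle_op L zs = 0"
  using grad_saddle_point_eq_0[OF assms] by (simp add: saddle_op_def zero_prod_def)

lemma norm_saddle_op: "norm (saddle_op L z) = norm (grad L z)"
  by (cases "grad L z") (simp add: saddle_op_def norm_Pair)

section \<open>Step sizes\<close>

lemma sum_inverse_shifted_products_le:
  "(\<Sum>j<k. 1 / ((real j + 1) * (real j + 3))) \<le> 3 / 4"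
proof -
  have "(\<Sum>j<k. 1 / ((real j + 1) * (real j + 3))) = 3 / 4 - (1 / (real k + 1) + 1 / (real k + 2)) / 2"
  proof (induction k)
    case (Suc k)
    have "1 / ((real k + 1) * (real k + 3)) = (1 / (real k + 1) - 1 / (real k + 3)) / 2"
      by (simp add: diff_frac_eq)
    moreover have Suc_shift: "real (Suc k) + 1 = real k + 2" "real (Suc k) + 2 = real k + 3"
      by simp_all
    ultimately show ?case unfolding sum.lessThan_Suc Suc.IH Suc_shift by argo
  qed simp
  then show ?thesis by simp
qed

lemma eag_alpha_Suc:
  "eag_alpha R a0 (Suc k) = eag_alpha R a0 k *
     (1 - 1 / ((real k + 1) * (real k + 3)) *
       ((eag_alpha R a0 k)\<^sup>2 * R\<^sup>2 / (1 - (eag_alpha R a0 k)\<^sup>2 * R\<^sup>2)))"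
  by (simp add: Let_def)

lemma eag_gamma_bounds:
  fixes R a0 :: real
  assumes "0 < R" "0 < a0" "a0 < 3 / (4 * R)"
  defines "\<gamma> \<equiv> a0\<^sup>2 * R\<^sup>2 / (1 - a0\<^sup>2 * R\<^sup>2)"
  shows "a0\<^sup>2 * R\<^sup>2 < 1" "0 \<le> \<gamma>" "\<gamma> * (3 / 4) < 1"
proof -
  have "(a0 * R)\<^sup>2 < (3 / 4)\<^sup>2"
    using assms(1-3) by (intro power_strict_mono) (auto simp: field_simps)
  then have small: "a0\<^sup>2 * R\<^sup>2 < 9 / 16" by (simp add: power_mult_distrib power_divide)
  then show "a0\<^sup>2 * R\<^sup>2 < 1" by simp
  show "0 \<le> \<gamma>" using small unfolding \<gamma>_def by simp
  show "\<gamma> * (3 / 4) < 1" using small unfolding \<gamma>_def by (simp add: field_simps)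
qed

lemma mult_one_minus_lower_bound_step:
  fixes a0 a \<gamma> S c \<rho> :: real
  assumes "0 \<le> a0" "0 \<le> a" "0 \<le> \<gamma>" "0 \<le> S" "0 \<le> c" "c * \<gamma> \<le> 1"
    and "a0 * (1 - \<gamma> * S) \<le> a" and "0 \<le> \<rho>" "\<rho> \<le> \<gamma>"
  shows "a0 * (1 - \<gamma> * (S + c)) \<le> a * (1 - c * \<rho>)"
proof -
  have "0 \<le> a0 * (\<gamma> * S * (c * \<gamma>))" using assms by simp
  then have "a0 * (1 - \<gamma> * (S + c)) \<le> a0 * (1 - \<gamma> * S) * (1 - c * \<gamma>)"
    by (simp add: algebra_simps)
  also have "\<dots> \<le> a * (1 - c * \<gamma>)"
    using assms by (intro mult_right_mono) auto
  also have "\<dots> \<le> a * (1 - c * \<rho>)"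
    using assms by (intro mult_left_mono) (auto intro: mult_left_mono)
  finally show ?thesis .
qed

text \<open>alpha_k / alpha_0 is the product of the factors 1 - c_j rho_j with c_j = 1/((j+1)(j+3))
  and rho_j \<le> gamma; Weierstrass' product inequality bounds it below by
  1 - gamma (c_0 + ... + c_(k-1)).\<close>
lemma eag_alpha_bounds:
  assumes R: "0 < R" and a0: "0 < a0" "a0 < 3 / (4 * R)"
  defines "\<gamma> \<equiv> a0\<^sup>2 * R\<^sup>2 / (1 - a0\<^sup>2 * R\<^sup>2)"
  shows "a0 * (1 - \<gamma> * (\<Sum>j<k. 1 / ((real j + 1) * (real j + 3)))) \<le> eag_alpha R a0 k
         \<and> eag_alpha R a0 k \<le> a0"
proof (induction k)
  case 0
  then show ?case by simp
next
  case (Suc k)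
  define a where "a = eag_alpha R a0 k"
  define S where "S = (\<Sum>j<k. 1 / ((real j + 1) * (real j + 3)))"
  define c where "c = 1 / ((real k + 1) * (real k + 3))"
  define \<rho> where "\<rho> = a\<^sup>2 * R\<^sup>2 / (1 - a\<^sup>2 * R\<^sup>2)"
  note \<gamma> = eag_gamma_bounds[OF assms(1-3), folded \<gamma>_def]
  have IH: "a0 * (1 - \<gamma> * S) \<le> a" "a \<le> a0" using Suc.IH unfolding a_def S_def by auto
  have S: "0 \<le> S" "S \<le> 3 / 4"
    using sum_inverse_shifted_products_le unfolding S_def by (auto intro: sum_nonneg)
  have "3 \<le> (real k + 1) * (real k + 3)" using mult_mono[of 1 "real k + 1" 3 "real k + 3"] by simp
  then have c: "0 \<le> c" "c \<le> 1 / 3" unfolding c_def using divide_left_mono[of 3 _ 1] by auto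
  have "c * \<gamma> \<le> 1 / 3 * (4 / 3)" using c \<gamma> by (intro mult_mono) auto
  then have c\<gamma>: "c * \<gamma> \<le> 1" by simp
  have "\<gamma> * S \<le> \<gamma> * (3 / 4)" using S \<gamma> by (intro mult_left_mono) auto
  with \<gamma>(3) a0(1) have "0 < a0 * (1 - \<gamma> * S)" by simp
  with IH(1) have a_pos: "0 < a" by linarith
  have "a\<^sup>2 * R\<^sup>2 \<le> a0\<^sup>2 * R\<^sup>2" using IH(2) a_pos by (intro mult_right_mono power_mono) auto
  then have \<rho>: "0 \<le> \<rho>" "\<rho> \<le> \<gamma>"
    using \<gamma>(1) unfolding \<rho>_def \<gamma>_def by (auto intro: frac_le)
  have step: "eag_alpha R a0 (Suc k) = a * (1 - c * \<rho>)"
    unfolding eag_alpha_Suc a_def c_def \<rho>_def by simp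
  have "a * (1 - c * \<rho>) \<le> a" using a_pos c \<rho> by (intro mult_left_le) auto
  with IH(2) have "a * (1 - c * \<rho>) \<le> a0" by linarith
  moreover have "a0 * (1 - \<gamma> * (S + c)) \<le> a * (1 - c * \<rho>)"
    using a0 a_pos \<gamma> S c c\<gamma> IH(1) \<rho> by (intro mult_one_minus_lower_bound_step) auto
  ultimately show ?case
    unfolding step S_def c_def by simp
qed

lemma eag_alpha_uniform_lower_bound:
  assumes "0 < R" "0 < a0" "a0 < 3 / (4 * R)"
  shows "\<exists>\<delta>>0. \<forall>k. \<delta> \<le> eag_alpha R a0 k"
proof (intro exI allI conjI)
  define \<gamma> where "\<gamma> = a0\<^sup>2 * R\<^sup>2 / (1 - a0\<^sup>2 * R\<^sup>2)"
  note \<gamma> = eag_gamma_bounds[OF assms, folded \<gamma>_def]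
  show "0 < a0 * (1 - \<gamma> * (3 / 4))" using assms(2) \<gamma>(3) by simp
  fix k
  have "\<gamma> * (\<Sum>j<k. 1 / ((real j + 1) * (real j + 3))) \<le> \<gamma> * (3 / 4)"
    using \<gamma>(2) sum_inverse_shifted_products_le by (rule mult_left_mono[rotated])
  with assms(2) have "a0 * (1 - \<gamma> * (3 / 4))
      \<le> a0 * (1 - \<gamma> * (\<Sum>j<k. 1 / ((real j + 1) * (real j + 3))))"
    by (intro mult_left_mono) auto
  also have "\<dots> \<le> eag_alpha R a0 k"
    using eag_alpha_bounds[OF assms, of k, folded \<gamma>_def] by blast
  finally show "a0 * (1 - \<gamma> * (3 / 4)) \<le> eag_alpha R a0 k" .
qed

lemma eag_alpha_pos:
  assumes "0 < R" "0 < a0" "a0 < 3 / (4 * R)"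
  shows "0 < eag_alpha R a0 k"
  using eag_alpha_uniform_lower_bound[OF assms] by (meson less_le_trans)

lemma eag_alpha_R_sq_less_1:
  assumes "0 < R" "0 < a0" "a0 < 3 / (4 * R)"
  shows "(eag_alpha R a0 k)\<^sup>2 * R\<^sup>2 < 1"
proof -
  have "(eag_alpha R a0 k)\<^sup>2 * R\<^sup>2 \<le> a0\<^sup>2 * R\<^sup>2"
    using eag_alpha_bounds[OF assms, of k] eag_alpha_pos[OF assms, of k]
    by (intro mult_right_mono power_mono) auto
  with eag_gamma_bounds(1)[OF assms] show ?thesis by linarith
qed

lemma eag_alpha_decseq:
  assumes "0 < R" "0 < a0" "a0 < 3 / (4 * R)"
  shows "decseq (eag_alpha R a0)"
proof (rule decseq_SucI)
  fix k
  define a where "a = eag_alpha R a0 k"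
  have "0 < a" "a\<^sup>2 * R\<^sup>2 < 1"
    using eag_alpha_pos[OF assms] eag_alpha_R_sq_less_1[OF assms] unfolding a_def by auto
  then have "0 \<le> 1 / ((real k + 1) * (real k + 3)) * (a\<^sup>2 * R\<^sup>2 / (1 - a\<^sup>2 * R\<^sup>2))" by simp
  with \<open>0 < a\<close> show "eag_alpha R a0 (Suc k) \<le> eag_alpha R a0 k"
    unfolding eag_alpha_Suc a_def[symmetric] by (simp add: mult_left_le)
qed

lemma eag_alpha_lim:
  assumes "0 < R" "0 < a0" "a0 < 3 / (4 * R)"
  shows "0 < lim (eag_alpha R a0)" "lim (eag_alpha R a0) \<le> eag_alpha R a0 k"
proof -
  obtain \<delta> where \<delta>: "0 < \<delta>" "\<And>k. \<delta> \<le> eag_alpha R a0 k"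
    using eag_alpha_uniform_lower_bound[OF assms] by blast
  obtain l where l: "eag_alpha R a0 \<longlonglongrightarrow> l" "\<And>k. l \<le> eag_alpha R a0 k"
    using decseq_convergent[OF eag_alpha_decseq[OF assms], of \<delta>] \<delta>(2) by blast
  have "lim (eag_alpha R a0) = l" using l(1) by (rule limI)
  moreover have "\<delta> \<le> l" using l(1) \<delta>(2) by (intro LIMSEQ_le_const) auto
  ultimately show "0 < lim (eag_alpha R a0)" "lim (eag_alpha R a0) \<le> eag_alpha R a0 k"
    using \<delta>(1) l(2) by auto
qed

section \<open>One anchored extragradient step\<close>

lemma inner_quadratic_form_nonneg:
  fixes h p :: "'a::real_inner" and a b c :: real
  assumes "0 < a" "4 * a * c = b\<^sup>2"
  shows "0 \<le> a * (h \<bullet> h) + b * (h \<bullet> p) + c * (p \<bullet> p)"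
proof -
  have "a * (a * (h \<bullet> h) + b * (h \<bullet> p) + c * (p \<bullet> p))
        = (a *\<^sub>R h + (b / 2) *\<^sub>R p) \<bullet> (a *\<^sub>R h + (b / 2) *\<^sub>R p)"
    using assms(2) by (simp add: inner_commute[of p h] power2_eq_square algebra_simps)
  then have "0 \<le> a * (a * (h \<bullet> h) + b * (h \<bullet> p) + c * (p \<bullet> p))" by simp
  then show ?thesis using assms(1) by (simp add: zero_le_mult_iff)
qed

text \<open>The recursion for the step sizes is exactly what makes the discriminant vanish.\<close>
lemma eag_step_coefficients:
  fixes K al R :: real
  assumes K: "K \<ge> 2" and al: "0 < al" and R: "0 < R" and r: "al\<^sup>2 * R\<^sup>2 < 1"
  defines "mu \<equiv> (K - 1) * K / (2 * al * R\<^sup>2)"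
    and "al' \<equiv> al * (1 - 1 / ((K - 1) * (K + 1)) * (al\<^sup>2 * R\<^sup>2 / (1 - al\<^sup>2 * R\<^sup>2)))"
  shows "0 < mu - al * (K - 1) * K / 2"
    and "4 * (mu - al * (K - 1) * K / 2) * (mu - al' * K * (K + 1) / 2) = (K\<^sup>2 * al - 2 * mu)\<^sup>2"
proof -
  define r where "r = al\<^sup>2 * R\<^sup>2"
  define D where "D = (K - 1) * (K + 1) * (1 - r)"
  have r0: "0 < r" "r < 1" using al R r unfolding r_def by auto
  have D0: "D \<noteq> 0" using K r0 unfolding D_def by auto
  have mu: "mu = al * (K - 1) * K / (2 * r)"
    unfolding mu_def r_def using al by (simp add: power2_eq_square)
  have al': "al' = al * (1 - r / D)"
    unfolding al'_def r_def[symmetric] D_def by simp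
  have "mu - al * (K - 1) * K / 2 = al * (K - 1) * K * (1 - r) / (2 * r)"
    unfolding mu using r0 by (simp add: field_simps)
  then show "0 < mu - al * (K - 1) * K / 2"
    using K al r0 by simp
  have "4 * (mu - al * (K - 1) * K / 2) * (mu - al' * K * (K + 1) / 2) * (r\<^sup>2 * D)
        = al\<^sup>2 * K\<^sup>2 * ((K - 1) * (1 - r)) * ((K - 1) * D - (K + 1) * (D - r) * r)"
    unfolding mu al' using r0 D0 by (simp add: field_simps power2_eq_square)
  also have "\<dots> = al\<^sup>2 * K\<^sup>2 * (K * r - (K - 1))\<^sup>2 * D"
    unfolding D_def by algebra
  also have "\<dots> = (K\<^sup>2 * al - 2 * mu)\<^sup>2 * (r\<^sup>2 * D)"
    unfolding mu using r0 by (simp add: field_simps power2_eq_square)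
  finally show "4 * (mu - al * (K - 1) * K / 2) * (mu - al' * K * (K + 1) / 2) = (K\<^sup>2 * al - 2 * mu)\<^sup>2"
    using r0 D0 by simp
qed

lemma eag_step_potential_identity:
  fixes g h p u :: "'a::real_inner" and K al mu A' :: real
  assumes "K \<noteq> 0"
  shows "(al * (K - 1) * K / 2 * (g \<bullet> g) + (K - 1) * (g \<bullet> u))
           - (A' * (p \<bullet> p) + K * (p \<bullet> ((1 - 1 / K) *\<^sub>R u - al *\<^sub>R h)))
         = (K - 1) * K * ((p - g) \<bullet> (- (1 / K) *\<^sub>R u - al *\<^sub>R h))
           + (al * (K - 1) * K / 2 * (norm (g - h))\<^sup>2 - mu * (norm (h - p))\<^sup>2)
           + ((mu - al * (K - 1) * K / 2) * (h \<bullet> h) + (K\<^sup>2 * al - 2 * mu) * (h \<bullet> p)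
              + (mu - A') * (p \<bullet> p))"
proof -
  have norms: "(norm (g - h))\<^sup>2 = g \<bullet> g - 2 * (g \<bullet> h) + h \<bullet> h"
    "(norm (h - p))\<^sup>2 = h \<bullet> h - 2 * (h \<bullet> p) + p \<bullet> p"
    by (simp_all add: power2_norm_eq_inner inner_diff_left inner_diff_right
        inner_commute[of h g] inner_commute[of p h])
  have anchored_term:
      "p \<bullet> ((1 - 1 / K) *\<^sub>R u - al *\<^sub>R h) = (1 - 1 / K) * (p \<bullet> u) - al * (h \<bullet> p)"
    by (simp add: inner_diff_right inner_commute[of p h])
  have monotone_term: "(p - g) \<bullet> (- (1 / K) *\<^sub>R u - al *\<^sub>R h)
      = - (1 / K) * (p \<bullet> u - g \<bullet> u) - al * (h \<bullet> p - g \<bullet> h)"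
    by (simp add: inner_diff_left inner_diff_right inner_commute[of p h] algebra_simps)
  show ?thesis
    unfolding norms anchored_term monotone_term
    using assms by (simp add: field_simps power2_eq_square)
qed

lemma eag_step_potential_decrease:
  fixes G :: "'a::real_inner \<Rightarrow> 'a" and z z0 w z' :: 'a
  assumes mono: "\<And>x y. 0 \<le> (G x - G y) \<bullet> (x - y)"
    and lip: "\<And>x y. norm (G x - G y) \<le> R * norm (x - y)"
    and K: "K \<ge> 2" and al: "0 < al" and R: "0 < R" and r: "al\<^sup>2 * R\<^sup>2 < 1"
    and half_step: "w = z + (1 / K) *\<^sub>R (z0 - z) - al *\<^sub>R G z"
    and step: "z' = z + (1 / K) *\<^sub>R (z0 - z) - al *\<^sub>R G w"
  defines "al' \<equiv> al * (1 - 1 / ((K - 1) * (K + 1)) * (al\<^sup>2 * R\<^sup>2 / (1 - al\<^sup>2 * R\<^sup>2)))"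
  shows "al' * K * (K + 1) / 2 * (norm (G z'))\<^sup>2 + K * (G z' \<bullet> (z' - z0))
         \<le> al * (K - 1) * K / 2 * (norm (G z))\<^sup>2 + (K - 1) * (G z \<bullet> (z - z0))"
proof -
  define mu where "mu = (K - 1) * K / (2 * al * R\<^sup>2)"
  define g h p u where "g = G z" and "h = G w" and "p = G z'" and "u = z - z0"
  have z'_z: "z' - z = - (1 / K) *\<^sub>R u - al *\<^sub>R h"
    unfolding step u_def h_def by (simp add: algebra_simps)
  have z'_z0: "z' - z0 = (1 - 1 / K) *\<^sub>R u - al *\<^sub>R h"
    unfolding step u_def h_def by (simp add: algebra_simps)
  have w_z': "w - z' = al *\<^sub>R (h - g)"
    unfolding step half_step h_def g_def by (simp add: algebra_simps)
  have monotone_part: "0 \<le> (K - 1) * K * ((p - g) \<bullet> (- (1 / K) *\<^sub>R u - al *\<^sub>R h))"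
    using mono[of z' z] K unfolding p_def g_def z'_z by simp
  have "norm (h - p) \<le> R * norm (w - z')" unfolding h_def p_def by (rule lip)
  also have "\<dots> = R * al * norm (g - h)"
    unfolding w_z' using al by (simp add: norm_minus_commute)
  finally have "mu * (norm (h - p))\<^sup>2 \<le> mu * (R * al * norm (g - h))\<^sup>2"
    unfolding mu_def using K al R by (intro mult_left_mono power_mono) auto
  also have "\<dots> = al * (K - 1) * K / 2 * (norm (g - h))\<^sup>2"
    unfolding mu_def using al R by (simp add: field_simps power2_eq_square)
  finally have lipschitz_part: "0 \<le> al * (K - 1) * K / 2 * (norm (g - h))\<^sup>2 - mu * (norm (h - p))\<^sup>2"
    by simp
  have square_part: "0 \<le> (mu - al * (K - 1) * K / 2) * (h \<bullet> h) + (K\<^sup>2 * al - 2 * mu) * (h \<bullet> p)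
                        + (mu - al' * K * (K + 1) / 2) * (p \<bullet> p)"
    using eag_step_coefficients[OF K al R r] unfolding mu_def al'_def
    by (intro inner_quadratic_form_nonneg)
  have "K \<noteq> 0" using K by simp
  then have "(al * (K - 1) * K / 2 * (norm g)\<^sup>2 + (K - 1) * (g \<bullet> u))
      - (al' * K * (K + 1) / 2 * (norm p)\<^sup>2 + K * (p \<bullet> (z' - z0)))
    = (K - 1) * K * ((p - g) \<bullet> (- (1 / K) *\<^sub>R u - al *\<^sub>R h))
      + (al * (K - 1) * K / 2 * (norm (g - h))\<^sup>2 - mu * (norm (h - p))\<^sup>2)
      + ((mu - al * (K - 1) * K / 2) * (h \<bullet> h) + (K\<^sup>2 * al - 2 * mu) * (h \<bullet> p)
         + (mu - al' * K * (K + 1) / 2) * (p \<bullet> p))"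
    unfolding z'_z0 power2_norm_eq_inner[of g] power2_norm_eq_inner[of p]
    by (rule eag_step_potential_identity)
  with monotone_part lipschitz_part square_part show ?thesis
    unfolding g_def p_def u_def by linarith
qed

section \<open>The potential along the iteration\<close>

definition eag_potential ::
    "(('n::finite,'m::finite) pt \<Rightarrow> real) \<Rightarrow> real \<Rightarrow> real \<Rightarrow> ('n,'m) pt \<Rightarrow> nat \<Rightarrow> real" where
  "eag_potential L R a0 z0 k =
     (let z = eag_z L R a0 z0 k
      in eag_alpha R a0 k * (real k + 1) * (real k + 2) / 2 * (norm (saddle_op L z))\<^sup>2
         + (real k + 1) * (saddle_op L z \<bullet> (z - z0)))"

lemma eag_potential_Suc_le:
  fixes L :: "('n::finite,'m::finite) pt \<Rightarrow> real"
  assumes R: "0 < R" and smooth: "R_smooth R L" and cc: "convex_concave L"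
    and a0: "0 < a0" "a0 < 3 / (4 * R)"
  shows "eag_potential L R a0 z0 (Suc k) \<le> eag_potential L R a0 z0 k"
proof -
  define K where "K = real k + 2"
  define al where "al = eag_alpha R a0 k"
  define z where "z = eag_z L R a0 z0 k"
  define w where "w = z + (1 / K) *\<^sub>R (z0 - z) - al *\<^sub>R saddle_op L z"
  define z' where "z' = z + (1 / K) *\<^sub>R (z0 - z) - al *\<^sub>R saddle_op L w"
  define al' where "al' = eag_alpha R a0 (Suc k)"
  have al'_eq: "al' = al * (1 - 1 / ((K - 1) * (K + 1)) * (al\<^sup>2 * R\<^sup>2 / (1 - al\<^sup>2 * R\<^sup>2)))"
    unfolding al'_def eag_alpha_Suc al_def K_def by (simp add: add.commute)
  have z_Suc: "eag_z L R a0 z0 (Suc k) = z'"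
    unfolding z'_def w_def z_def al_def K_def by (simp add: Let_def)
  have shift: "real (Suc k) + 1 = K" "real (Suc k) + 2 = K + 1" "real k + 1 = K - 1" "real k + 2 = K"
    unfolding K_def by simp_all
  have "eag_potential L R a0 z0 (Suc k)
      = al' * K * (K + 1) / 2 * (norm (saddle_op L z'))\<^sup>2 + K * (saddle_op L z' \<bullet> (z' - z0))"
    unfolding eag_potential_def Let_def z_Suc shift al'_def ..
  moreover have "eag_potential L R a0 z0 k
      = al * (K - 1) * K / 2 * (norm (saddle_op L z))\<^sup>2 + (K - 1) * (saddle_op L z \<bullet> (z - z0))"
    unfolding eag_potential_def Let_def shift al_def z_def ..
  moreover have "al' * K * (K + 1) / 2 * (norm (saddle_op L z'))\<^sup>2 + K * (saddle_op L z' \<bullet> (z' - z0))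
      \<le> al * (K - 1) * K / 2 * (norm (saddle_op L z))\<^sup>2 + (K - 1) * (saddle_op L z \<bullet> (z - z0))"
    unfolding al'_eq using saddle_op_monotone[OF smooth cc] saddle_op_lipschitz[OF smooth]
    by (rule eag_step_potential_decrease)
      (use R eag_alpha_pos[OF R a0] eag_alpha_R_sq_less_1[OF R a0] in
        \<open>auto simp: K_def al_def w_def z'_def\<close>)
  ultimately show ?thesis by simp
qed

lemma eag_potential_0_le:
  fixes L :: "('n::finite,'m::finite) pt \<Rightarrow> real"
  assumes "R_smooth R L" "saddle_point L zs" "0 < a0"
  shows "eag_potential L R a0 z0 0 \<le> a0 * R\<^sup>2 * (norm (z0 - zs))\<^sup>2"
proof -
  have "norm (saddle_op L z0) \<le> R * norm (z0 - zs)"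
    using saddle_op_lipschitz[OF assms(1), of z0 zs] saddle_op_saddle_point_eq_0[OF assms(1,2)]
    by simp
  then have "(norm (saddle_op L z0))\<^sup>2 \<le> (R * norm (z0 - zs))\<^sup>2"
    by (intro power_mono) auto
  with assms(3) show ?thesis
    by (simp add: eag_potential_def power_mult_distrib mult_left_mono)
qed

lemma eag_potential_ge:
  fixes L :: "('n::finite,'m::finite) pt \<Rightarrow> real"
    and R a0 :: real and z0 :: "('n,'m) pt" and k :: nat
  assumes "R_smooth R L" "convex_concave L" "saddle_point L zs"
  defines "x \<equiv> norm (saddle_op L (eag_z L R a0 z0 k))"
  shows "eag_alpha R a0 k * (real k + 1) * (real k + 2) / 2 * x\<^sup>2 - (real k + 1) * x * norm (z0 - zs)
         \<le> eag_potential L R a0 z0 k"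
proof -
  define z where "z = eag_z L R a0 z0 k"
  define g where "g = saddle_op L z"
  have "0 \<le> g \<bullet> (z - zs)"
    unfolding g_def by (rule saddle_op_inner_nonneg_saddle_point[OF assms(1-3)])
  moreover have "- (x * norm (z0 - zs)) \<le> g \<bullet> (zs - z0)"
    using Cauchy_Schwarz_ineq2[of g "zs - z0"]
    unfolding x_def g_def z_def by (simp add: norm_minus_commute)
  moreover have "g \<bullet> (z - z0) = g \<bullet> (z - zs) + g \<bullet> (zs - z0)"
    by (simp add: inner_diff_right)
  ultimately have "(real k + 1) * (- (x * norm (z0 - zs))) \<le> (real k + 1) * (g \<bullet> (z - z0))"
    by (intro mult_left_mono) auto
  then show ?thesis
    unfolding eag_potential_def x_def g_def z_def by (simp add: Let_def algebra_simps)
qed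

lemma sq_le_of_quadratic_le:
  fixes A B c x :: real
  assumes "0 < A" "A * x\<^sup>2 \<le> c + B * x"
  shows "A\<^sup>2 * x\<^sup>2 \<le> 2 * A * c + B\<^sup>2"
proof -
  have "2 * A * (A * x\<^sup>2) \<le> 2 * A * (c + B * x)"
    using assms by (intro mult_left_mono) auto
  moreover have "0 \<le> (A * x - B)\<^sup>2" by simp
  ultimately show ?thesis by (simp add: power2_eq_square algebra_simps)
qed

lemma eag_rate_of_potential_bound:
  fixes k ai al x D :: real
  assumes k: "0 \<le> k" and ai: "0 < ai" "ai \<le> al"
    and bound: "al * (k + 1) * (k + 2) / 2 * x\<^sup>2 - (k + 1) * x * D \<le> a0 * R\<^sup>2 * D\<^sup>2"
  shows "x\<^sup>2 \<le> 4 * (1 + a0 * ai * R\<^sup>2) / ai\<^sup>2 * D\<^sup>2 / ((k + 1) * (k + 2))"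
proof -
  define P where "P = (k + 1) * (k + 2)"
  define A where "A = ai * P / 2"
  have P: "0 < P" unfolding P_def using k by simp
  have A: "0 < A" unfolding A_def using ai P by simp
  have "A * x\<^sup>2 \<le> al * (k + 1) * (k + 2) / 2 * x\<^sup>2"
    unfolding A_def P_def using ai k by (intro mult_right_mono) auto
  with bound have "A * x\<^sup>2 \<le> a0 * R\<^sup>2 * D\<^sup>2 + ((k + 1) * D) * x" by (simp add: algebra_simps)
  from sq_le_of_quadratic_le[OF A this]
  have "A\<^sup>2 * x\<^sup>2 \<le> 2 * A * (a0 * R\<^sup>2 * D\<^sup>2) + ((k + 1) * D)\<^sup>2" .
  also have "\<dots> \<le> 2 * A * (a0 * R\<^sup>2 * D\<^sup>2) + P * D\<^sup>2"
  proof -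
    have "(k + 1)\<^sup>2 \<le> P" unfolding P_def using k by (simp add: power2_eq_square)
    from mult_right_mono[OF this, of "D\<^sup>2"] show ?thesis by (simp add: power_mult_distrib)
  qed
  also have "\<dots> = A\<^sup>2 * (4 * (1 + a0 * ai * R\<^sup>2) / ai\<^sup>2 * D\<^sup>2 / P)"
    unfolding A_def using ai P by (simp add: field_simps power2_eq_square)
  finally show ?thesis
    unfolding P_def[symmetric] by (rule mult_left_le_imp_le) (use A in simp)
qed

theorem theorem2:
  fixes L :: "(real^'n) \<times> (real^'m) \<Rightarrow> real"
    and R a0 :: real and zs z0 :: "(real^'n) \<times> (real^'m)"
  assumes "R > 0"
    and "R_smooth R L"
    and "convex_concave L"
    and "saddle_point L zs"
    and "0 < a0" and "a0 < 3 / (4 * R)"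
  shows "\<forall>k. (norm (grad L (eag_z L R a0 z0 k)))^2
          \<le> 4 * (1 + a0 * lim (eag_alpha R a0) * R^2) / (lim (eag_alpha R a0))^2
            * (norm (z0 - zs))^2 / ((real k + 1) * (real k + 2))"
proof
  fix k
  have "decseq (eag_potential L R a0 z0)"
    by (rule decseq_SucI) (rule eag_potential_Suc_le[OF assms(1-3,5,6)])
  then have "eag_potential L R a0 z0 k \<le> eag_potential L R a0 z0 0"
    by (rule decseqD) simp
  also have "\<dots> \<le> a0 * R\<^sup>2 * (norm (z0 - zs))\<^sup>2"
    by (rule eag_potential_0_le[OF assms(2,4,5)])
  finally have "eag_alpha R a0 k * (real k + 1) * (real k + 2) / 2 * (norm (grad L (eag_z L R a0 z0 k)))\<^sup>2
      - (real k + 1) * norm (grad L (eag_z L R a0 z0 k)) * norm (z0 - zs)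
      \<le> a0 * R\<^sup>2 * (norm (z0 - zs))\<^sup>2"
    using eag_potential_ge[OF assms(2-4)]
    unfolding norm_saddle_op[symmetric] by (rule order_trans[rotated])
  then show "(norm (grad L (eag_z L R a0 z0 k)))^2
          \<le> 4 * (1 + a0 * lim (eag_alpha R a0) * R^2) / (lim (eag_alpha R a0))^2
            * (norm (z0 - zs))^2 / ((real k + 1) * (real k + 2))"
    by (rule eag_rate_of_potential_bound[OF of_nat_0_le_iff eag_alpha_lim[OF assms(1,5,6)]])
qed

end
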